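(* Let $R$ be a commutative ring and $\underline a=a_1,\dots,a_r$ an $R$-regular sequence. Suppose $B$ and $B'$ are matrices with $r$ rows and entries in $R$ such that $(\underline a\cdot B)=(\underline a\cdot B')$. Then $(\underline a\cdot B)+I_r(B)=(\underline a\cdot B')+I_r(B')$.
   Context: $(\underline a\cdot B)$ is the ideal generated by the entries of $[a_1\cdots a_r]\cdot B$; $I_r(B)$ is the ideal of $r\times r$ minors of $B$. *)

theory Defs
  imports "Jordan_Normal_Form.Determinant" "Jordan_Normal_Form.DL_Submatrix"
begin

definition ideal_gen :: "'a::comm_ring_1 set \<Rightarrow> 'a set" where
  "ideal_gen S = {x. \<exists>F c. finite F \<and> F \<subseteq> S \<and> x = (\<Sum>s\<in>F. c s * s)}"

definition regular_seq :: "(nat \<Rightarrow> 'a::comm_ring_1) \<Rightarrow> nat \<Rightarrow> bool" where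
  "regular_seq a r \<longleftrightarrow>
     (\<forall>i<r. \<forall>x. a i * x \<in> ideal_gen (a ` {..<i}) \<longrightarrow> x \<in> ideal_gen (a ` {..<i}))
     \<and> ideal_gen (a ` {..<r}) \<noteq> UNIV"

definition seq_mat_ideal :: "(nat \<Rightarrow> 'a::comm_ring_1) \<Rightarrow> nat \<Rightarrow> 'a mat \<Rightarrow> 'a set" where
  "seq_mat_ideal a r B = ideal_gen {(\<Sum>i<r. a i * B $$ (i, j)) | j. j < dim_col B}"

definition minor_ideal :: "nat \<Rightarrow> 'a::comm_ring_1 mat \<Rightarrow> 'a set" where
  "minor_ideal k B = ideal_gen {det (submatrix B I J) | I J.
       I \<subseteq> {..<dim_row B} \<and> J \<subseteq> {..<dim_col B} \<and> card I = k \<and> card J = k}"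

end

theory Submission
  imports Defs
begin

text \<open>
  Every r x r minor of B is the determinant of a square matrix N each of whose columns c
  satisfies a.c \<in> (a.B'). The columns of N are replaced one at a time by columns of B':
  writing a.c = sum_l C_l (a.b'_l), the difference t = c - sum_l C_l b'_l is a syzygy of
  the regular sequence a, hence a Koszul relation t_i = sum_j (U_ij - U_ji) a_j. Expanding
  the determinant along t thus produces only the elements a_j C_i - a_i C_j formed from the
  cofactors C_i of that column, and the adjugate identity puts these into the ideal
  generated by the remaining entries of a.N. Once all columns come from B', the determinant
  is a signed r x r minor of B' or zero.
\<close>

definition is_ideal :: "'a::comm_ring_1 set \<Rightarrow> bool" where
  "is_ideal T \<longleftrightarrow> 0 \<in> T \<and> (\<forall>x\<in>T. \<forall>y\<in>T. x + y \<in> T) \<and> (\<forall>x\<in>T. \<forall>c. c * x \<in> T)"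

lemma is_ideal_zero: "is_ideal T \<Longrightarrow> 0 \<in> T"
  and is_ideal_add: "is_ideal T \<Longrightarrow> x \<in> T \<Longrightarrow> y \<in> T \<Longrightarrow> x + y \<in> T"
  and is_ideal_mult: "is_ideal T \<Longrightarrow> x \<in> T \<Longrightarrow> c * x \<in> T"
  unfolding is_ideal_def by blast+

lemma is_ideal_sum:
  assumes "is_ideal T" "finite A" "\<And>i. i \<in> A \<Longrightarrow> f i \<in> T"
  shows "sum f A \<in> T"
  using assms(2,3)
  by (induction A rule: finite_induct) (auto intro: is_ideal_zero is_ideal_add assms(1))

lemma ideal_gen_minimal:
  assumes "is_ideal T" "S \<subseteq> T"
  shows "ideal_gen S \<subseteq> T"
proof
  fix x assume "x \<in> ideal_gen S"
  then obtain F c where F: "finite F" "F \<subseteq> S" "x = (\<Sum>s\<in>F. c s * s)"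
    unfolding ideal_gen_def by auto
  show "x \<in> T" unfolding F(3)
    using F assms by (intro is_ideal_sum is_ideal_mult) auto
qed

lemma ideal_gen_base: "s \<in> S \<Longrightarrow> s \<in> ideal_gen S"
  unfolding ideal_gen_def by (intro CollectI exI[of _ "{s}"] exI[of _ "\<lambda>_. 1"]) auto

lemma is_ideal_ideal_gen: "is_ideal (ideal_gen S)"
  unfolding is_ideal_def
proof (intro conjI ballI allI)
  show "0 \<in> ideal_gen S" unfolding ideal_gen_def
    by (intro CollectI exI[of _ "{}"]) auto
next
  fix x y assume "x \<in> ideal_gen S" "y \<in> ideal_gen S"
  then obtain F1 c1 F2 c2 where F: "finite F1" "F1 \<subseteq> S" "x = (\<Sum>s\<in>F1. c1 s * s)"
     "finite F2" "F2 \<subseteq> S" "y = (\<Sum>s\<in>F2. c2 s * s)"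
    unfolding ideal_gen_def by auto
  let ?c = "\<lambda>s. (if s \<in> F1 then c1 s else 0) + (if s \<in> F2 then c2 s else 0)"
  have "(\<Sum>s\<in>F1 \<union> F2. ?c s * s) = (\<Sum>s\<in>F1 \<union> F2. if s \<in> F1 then c1 s * s else 0)
      + (\<Sum>s\<in>F1 \<union> F2. if s \<in> F2 then c2 s * s else 0)"
    by (simp only: sum.distrib[symmetric], rule sum.cong) (auto simp: distrib_right)
  also have "\<dots> = x + y"
    using F by (simp add: sum.If_cases Int_absorb1)
  finally show "x + y \<in> ideal_gen S" unfolding ideal_gen_def
    using F by (intro CollectI exI[of _ "F1 \<union> F2"] exI[of _ ?c]) auto
next
  fix x c assume "x \<in> ideal_gen S"
  then obtain F c1 where F: "finite F" "F \<subseteq> S" "x = (\<Sum>s\<in>F. c1 s * s)"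
    unfolding ideal_gen_def by auto
  show "c * x \<in> ideal_gen S" unfolding ideal_gen_def
    using F by (intro CollectI exI[of _ F] exI[of _ "\<lambda>s. c * c1 s"])
      (auto simp: sum_distrib_left mult.assoc)
qed

lemma ideal_gen_zero: "0 \<in> ideal_gen S"
  and ideal_gen_mult: "x \<in> ideal_gen S \<Longrightarrow> c * x \<in> ideal_gen S"
  and ideal_gen_sum: "finite A \<Longrightarrow> (\<And>i. i \<in> A \<Longrightarrow> f i \<in> ideal_gen S) \<Longrightarrow> sum f A \<in> ideal_gen S"
  using is_ideal_ideal_gen[of S] by (auto intro: is_ideal_zero is_ideal_mult is_ideal_sum)

lemma ideal_gen_image_finite:
  assumes "finite I" "x \<in> ideal_gen (g ` I)"
  obtains e where "x = (\<Sum>i\<in>I. e i * g i)"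
proof -
  let ?T = "{x. \<exists>e. x = (\<Sum>i\<in>I. e i * g i)}"
  have "is_ideal ?T" unfolding is_ideal_def
  proof (intro conjI ballI allI)
    show "0 \<in> ?T" by (auto intro: exI[of _ "\<lambda>_. 0"])
  next
    fix x y assume "x \<in> ?T" "y \<in> ?T"
    then obtain e1 e2 where "x = (\<Sum>i\<in>I. e1 i * g i)" "y = (\<Sum>i\<in>I. e2 i * g i)" by auto
    then show "x + y \<in> ?T"
      by (auto intro!: exI[of _ "\<lambda>i. e1 i + e2 i"] simp: sum.distrib distrib_right)
  next
    fix x c assume "x \<in> ?T"
    then obtain e where "x = (\<Sum>i\<in>I. e i * g i)" by auto
    then show "c * x \<in> ?T"
      by (auto intro!: exI[of _ "\<lambda>i. c * e i"] simp: sum_distrib_left mult.assoc)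
  qed
  moreover have "g j \<in> ?T" if "j \<in> I" for j
  proof -
    have "(\<Sum>i\<in>I. (if i = j then 1 else 0) * g i) = g j"
      using assms(1) that by (simp add: if_distrib[of "\<lambda>c. c * _"] cong: if_cong)
    then show ?thesis by (auto intro!: exI[of _ "\<lambda>i. if i = j then 1 else 0"])
  qed
  ultimately have "x \<in> ?T" using ideal_gen_minimal assms(2) by blast
  then show ?thesis using that by blast
qed

abbreviation ideal_add :: "'a::comm_ring_1 set \<Rightarrow> 'a set \<Rightarrow> 'a set" where
  "ideal_add X Y \<equiv> {x + y | x y. x \<in> X \<and> y \<in> Y}"

lemma is_ideal_ideal_add:
  assumes "is_ideal X" "is_ideal Y"
  shows "is_ideal (ideal_add X Y)"
  unfolding is_ideal_def
proof (intro conjI ballI allI)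
  show "0 \<in> ideal_add X Y" using assms by (force intro: is_ideal_zero)
next
  fix u v assume "u \<in> ideal_add X Y" "v \<in> ideal_add X Y"
  then obtain x1 y1 x2 y2 where "u = x1 + y1" "v = x2 + y2" "x1 \<in> X" "y1 \<in> Y" "x2 \<in> X" "y2 \<in> Y"
    by auto
  moreover have "u + v = (x1 + x2) + (y1 + y2)" using calculation by (simp add: ac_simps)
  ultimately show "u + v \<in> ideal_add X Y" using assms by (blast intro: is_ideal_add)
next
  fix u c assume "u \<in> ideal_add X Y"
  then obtain x y where "u = x + y" "x \<in> X" "y \<in> Y" by auto
  moreover have "c * u = c * x + c * y" using calculation by (simp add: distrib_left)
  ultimately show "c * u \<in> ideal_add X Y" using assms by (blast intro: is_ideal_mult)
qed

lemma ideal_add_upper1: "is_ideal Y \<Longrightarrow> X \<subseteq> ideal_add X Y"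
  and ideal_add_upper2: "is_ideal X \<Longrightarrow> Y \<subseteq> ideal_add X Y"
  by (force intro: is_ideal_zero)+

lemma ideal_add_least: "is_ideal T \<Longrightarrow> X \<subseteq> T \<Longrightarrow> Y \<subseteq> T \<Longrightarrow> ideal_add X Y \<subseteq> T"
  by (auto intro: is_ideal_add)


definition weakly_regular_seq :: "(nat \<Rightarrow> 'a::comm_ring_1) \<Rightarrow> nat \<Rightarrow> bool" where
  "weakly_regular_seq a r \<longleftrightarrow>
     (\<forall>i<r. \<forall>x. a i * x \<in> ideal_gen (a ` {..<i}) \<longrightarrow> x \<in> ideal_gen (a ` {..<i}))"

lemma regular_seq_imp_weakly_regular: "regular_seq a r \<Longrightarrow> weakly_regular_seq a r"
  unfolding regular_seq_def weakly_regular_seq_def by blast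

lemma weakly_regular_seq_Suc: "weakly_regular_seq a (Suc r) \<Longrightarrow> weakly_regular_seq a r"
  unfolding weakly_regular_seq_def by simp

lemma weakly_regular_syzygy_koszul:
  fixes a :: "nat \<Rightarrow> 'a::comm_ring_1"
  assumes "weakly_regular_seq a r" and "(\<Sum>i<r. a i * t i) = 0"
  shows "\<exists>U. \<forall>i<r. t i = (\<Sum>j<r. (U i j - U j i) * a j)"
  using assms
proof (induction r arbitrary: t)
  case 0 then show ?case by simp
next
  case (Suc r)
  have "a r * t r = (\<Sum>i<r. - t i * a i)"
    using Suc.prems(2) by (simp add: sum_negf mult.commute eq_neg_iff_add_eq_0 add.commute)
  also have "\<dots> \<in> ideal_gen (a ` {..<r})"
    by (intro ideal_gen_sum ideal_gen_mult ideal_gen_base) auto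
  finally have "t r \<in> ideal_gen (a ` {..<r})"
    using Suc.prems(1) unfolding weakly_regular_seq_def by blast
  then obtain e where e: "t r = (\<Sum>i<r. e i * a i)"
    using ideal_gen_image_finite[of "{..<r}"] by blast
  define t' where "t' i = t i + e i * a r" for i
  have "(\<Sum>i<r. a i * t' i) = (\<Sum>i<r. a i * t i) + a r * (\<Sum>i<r. e i * a i)"
    unfolding t'_def by (simp add: algebra_simps sum.distrib sum_distrib_left)
  also have "\<dots> = 0" using Suc.prems(2) e by simp
  finally obtain U' where U': "\<forall>i<r. t' i = (\<Sum>j<r. (U' i j - U' j i) * a j)"
    using Suc.IH weakly_regular_seq_Suc[OF Suc.prems(1)] by blast
  define U where
    "U i j = (if i < r \<and> j < r then U' i j else if i = r \<and> j < r then e j else 0)" for i j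
  have "t i = (\<Sum>j<Suc r. (U i j - U j i) * a j)" if i: "i < Suc r" for i
  proof (cases "i < r")
    case True
    then have "(\<Sum>j<Suc r. (U i j - U j i) * a j) = t' i - e i * a r"
      using U' by (simp add: U_def)
    then show ?thesis unfolding t'_def by simp
  next
    case False
    then have "i = r" using i by simp
    with e show ?thesis by (simp add: U_def)
  qed
  then show ?case by blast
qed


definition seq_mat_entry :: "(nat \<Rightarrow> 'a::comm_ring_1) \<Rightarrow> nat \<Rightarrow> 'a mat \<Rightarrow> nat \<Rightarrow> 'a" where
  "seq_mat_entry a r M l = (\<Sum>i<r. a i * M $$ (i, l))"

lemma seq_mat_ideal_eq: "seq_mat_ideal a r B = ideal_gen (seq_mat_entry a r B ` {..<dim_col B})"
  unfolding seq_mat_ideal_def seq_mat_entry_def by (rule arg_cong[of _ _ ideal_gen]) auto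

lemma is_ideal_seq_mat_ideal: "is_ideal (seq_mat_ideal a r B)"
  and is_ideal_minor_ideal: "is_ideal (minor_ideal k B)"
  unfolding seq_mat_ideal_def minor_ideal_def by (rule is_ideal_ideal_gen)+

lemma cofactor_replace_col:
  assumes "M \<in> carrier_mat n n"
  shows "cofactor (replace_col M b k) i k = cofactor M i k"
proof -
  have "mat_delete (replace_col M b k) i k = mat_delete M i k"
    by (rule eq_matI) (use assms in \<open>auto simp: mat_delete_def replace_col_def\<close>)
  then show ?thesis unfolding cofactor_def by simp
qed

lemma det_replace_col:
  assumes M: "M \<in> carrier_mat n n" and k: "k < n"
  shows "det (replace_col M (vec n v) k) = (\<Sum>i<n. v i * cofactor M i k)"
proof -
  let ?M' = "replace_col M (vec n v) k"
  have entry: "?M' $$ (i, k) = v i" if "i < n" for i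
    using M k that by (simp add: replace_col_def)
  have "?M' \<in> carrier_mat n n" using M by (simp add: replace_col_def)
  then have "det ?M' = (\<Sum>i<n. ?M' $$ (i, k) * cofactor ?M' i k)"
    using k by (rule laplace_expansion_column)
  also have "\<dots> = (\<Sum>i<n. v i * cofactor M i k)"
    by (intro sum.cong) (simp_all add: entry cofactor_replace_col[OF M])
  finally show ?thesis .
qed

lemma sum_mult_cofactor_row:
  assumes M: "M \<in> carrier_mat n n" and "m < n" "j < n"
  shows "(\<Sum>l<n. M $$ (m, l) * cofactor M j l) = (if m = j then det M else 0)"
proof -
  have "(\<Sum>l<n. M $$ (m, l) * cofactor M j l) = (M * adj_mat M) $$ (m, j)"
    unfolding times_mat_def scalar_prod_def adj_mat_def using assms by (auto intro: sum.cong)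
  also have "\<dots> = (det M \<cdot>\<^sub>m 1\<^sub>m n) $$ (m, j)" using adj_mat(2)[OF M] by simp
  finally show ?thesis using assms by simp
qed

lemma sum_seq_mat_entry_cofactor:
  assumes M: "M \<in> carrier_mat n n" and j: "j < n"
  shows "(\<Sum>l<n. seq_mat_entry a n M l * cofactor M j l) = a j * det M"
proof -
  have "(\<Sum>l<n. seq_mat_entry a n M l * cofactor M j l)
      = (\<Sum>l<n. \<Sum>m<n. a m * (M $$ (m, l) * cofactor M j l))"
    unfolding seq_mat_entry_def by (simp add: sum_distrib_right mult.assoc)
  also have "\<dots> = (\<Sum>m<n. a m * (\<Sum>l<n. M $$ (m, l) * cofactor M j l))"
    by (subst sum.swap) (simp add: sum_distrib_left)
  also have "\<dots> = (\<Sum>m<n. if m = j then a m * det M else 0)"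
    using assms by (intro sum.cong) (auto simp: sum_mult_cofactor_row)
  also have "\<dots> = a j * det M" using j by simp
  finally show ?thesis .
qed

text \<open>Apply the previous identity to M with its k-th column replaced by the i-th unit vector:
  there the k-th entry of a.M becomes a_i and the i-th cofactor of column k becomes its
  determinant.\<close>

lemma cofactor_koszul_mem:
  assumes M: "M \<in> carrier_mat n n" and k: "k < n" and i: "i < n" and j: "j < n"
  shows "a j * cofactor M i k - a i * cofactor M j k
    \<in> ideal_gen (seq_mat_entry a n M ` ({..<n} - {k}))"
proof -
  define Q where "Q = replace_col M (unit_vec n i) k"
  have Q: "Q \<in> carrier_mat n n" using M by (simp add: Q_def replace_col_def)
  have det_Q: "det Q = cofactor M i k"
  proof -
    have "det Q = (\<Sum>p<n. (if p = i then 1 else 0) * cofactor M p k)"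
      unfolding Q_def unit_vec_def by (rule det_replace_col[OF M k])
    also have "\<dots> = cofactor M i k"
      using i by (simp add: if_distrib[of "\<lambda>c. c * _"] cong: if_cong)
    finally show ?thesis .
  qed
  have entry_k: "seq_mat_entry a n Q k = a i"
  proof -
    have "seq_mat_entry a n Q k = (\<Sum>m<n. if m = i then a m else 0)"
      unfolding seq_mat_entry_def
      by (intro sum.cong) (use M k in \<open>auto simp: Q_def replace_col_def unit_vec_def\<close>)
    then show ?thesis using i by simp
  qed
  have entry_other: "seq_mat_entry a n Q l = seq_mat_entry a n M l" if "l < n" "l \<noteq> k" for l
    unfolding seq_mat_entry_def
    by (intro sum.cong) (use M that in \<open>auto simp: Q_def replace_col_def\<close>)
  have "a j * det Q = (\<Sum>l<n. seq_mat_entry a n Q l * cofactor Q j l)"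
    using sum_seq_mat_entry_cofactor[OF Q j] by simp
  also have "\<dots> = a i * cofactor Q j k
      + (\<Sum>l\<in>{..<n} - {k}. seq_mat_entry a n M l * cofactor Q j l)"
    using k entry_k entry_other by (simp add: sum.remove[of "{..<n}" k])
  finally have "a j * cofactor M i k - a i * cofactor M j k
      = (\<Sum>l\<in>{..<n} - {k}. cofactor Q j l * seq_mat_entry a n M l)"
    using det_Q cofactor_replace_col[OF M] by (simp add: Q_def algebra_simps)
  also have "\<dots> \<in> ideal_gen (seq_mat_entry a n M ` ({..<n} - {k}))"
    by (intro ideal_gen_sum ideal_gen_mult ideal_gen_base) auto
  finally show ?thesis .
qed

lemma det_mem_ideal_of_syzygy_col:
  assumes reg: "weakly_regular_seq a n" and M: "M \<in> carrier_mat n n" and k: "k < n"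
    and syz: "seq_mat_entry a n M k = 0"
  shows "det M \<in> ideal_gen (seq_mat_entry a n M ` ({..<n} - {k}))"
proof -
  define c where "c i = cofactor M i k" for i
  obtain U where U: "\<forall>i<n. M $$ (i, k) = (\<Sum>j<n. (U i j - U j i) * a j)"
    using weakly_regular_syzygy_koszul[OF reg, of "\<lambda>i. M $$ (i, k)"] syz
    unfolding seq_mat_entry_def by blast
  have "det M = (\<Sum>i<n. M $$ (i, k) * c i)"
    unfolding c_def by (rule laplace_expansion_column[OF M k])
  also have "\<dots> = (\<Sum>i<n. \<Sum>j<n. U i j * (a j * c i)) - (\<Sum>i<n. \<Sum>j<n. U j i * (a j * c i))"
    using U by (simp add: sum_distrib_right left_diff_distrib sum_subtractf mult.assoc)
  also have "(\<Sum>i<n. \<Sum>j<n. U j i * (a j * c i)) = (\<Sum>i<n. \<Sum>j<n. U i j * (a i * c j))"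
    by (rule sum.swap)
  also have "(\<Sum>i<n. \<Sum>j<n. U i j * (a j * c i)) - (\<Sum>i<n. \<Sum>j<n. U i j * (a i * c j))
      = (\<Sum>i<n. \<Sum>j<n. U i j * (a j * c i - a i * c j))"
    by (simp add: right_diff_distrib sum_subtractf)
  also have "\<dots> \<in> ideal_gen (seq_mat_entry a n M ` ({..<n} - {k}))"
    unfolding c_def using M k by (intro ideal_gen_sum ideal_gen_mult cofactor_koszul_mem) auto
  finally show ?thesis .
qed


lemma det_selected_cols_eq_signof:
  assumes B: "B \<in> carrier_mat r n" and N: "N \<in> carrier_mat r r"
    and f: "\<forall>q<r. f q < n \<and> col N q = col B (f q)" and inj: "inj_on f {..<r}"
  shows "\<exists>\<sigma>. det N = signof \<sigma> * det (submatrix B {..<r} (f ` {..<r}))"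
proof -
  define J where "J = f ` {..<r}"
  define S where "S = submatrix B {..<r} J"
  define \<sigma> where "\<sigma> q = (if q < r then card {x \<in> J. x < f q} else q)" for q
  have card_J: "card J = r" unfolding J_def using card_image[OF inj] by simp
  have S: "S \<in> carrier_mat r r"
  proof -
    have "{i. i < dim_row B \<and> i \<in> {..<r}} = {..<r}" "{j. j < dim_col B \<and> j \<in> J} = J"
      using B f by (auto simp: J_def)
    then show ?thesis
      unfolding S_def carrier_mat_def using dim_submatrix[of B "{..<r}" J] card_J by simp
  qed
  have N_S: "N $$ (p, q) = S $$ (p, \<sigma> q)" if p: "p < r" and q: "q < r" for p q
  proof -
    have "{x \<in> {..<r}. x < p} = {..<p}" using p by auto
    then have "S $$ (p, \<sigma> q) = B $$ (p, f q)"
      using submatrix_index_card[of p B "f q" "{..<r}" J] B f p q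
      by (simp add: S_def \<sigma>_def J_def)
    also have "\<dots> = N $$ (p, q)"
      using index_col[of p N q] index_col[of p B "f q"] B N f p q by force
    finally show ?thesis by simp
  qed
  have pick_\<sigma>: "pick J (\<sigma> q) = f q" if "q < r" for q
    using pick_card_in_set[of "f q" J] that unfolding \<sigma>_def J_def by auto
  have "\<sigma> q < r" if q: "q < r" for q
  proof -
    have "{x \<in> J. x < f q} \<subset> J" using q unfolding J_def by auto
    then show ?thesis using psubset_card_mono[of J] q card_J unfolding \<sigma>_def J_def by auto
  qed
  moreover have "inj_on \<sigma> {..<r}"
    using inj pick_\<sigma> by (metis inj_onI inj_onD lessThan_iff)
  ultimately have "\<sigma> ` {..<r} = {..<r}"
    by (intro endo_inj_surj) auto
  then have perm: "\<sigma> permutes {0..<r}"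
    using \<open>inj_on \<sigma> {..<r}\<close>
    by (intro bij_imp_permutes) (auto simp: bij_betw_def atLeast0LessThan \<sigma>_def)
  have "transpose_mat N = mat r r (\<lambda>(i, j). transpose_mat S $$ (\<sigma> i, j))"
    by (rule eq_matI) (use N S N_S \<open>\<And>q. q < r \<Longrightarrow> \<sigma> q < r\<close> in auto)
  then have "det N = signof \<sigma> * det (transpose_mat S)"
    using det_transpose[OF N] det_permute_rows[OF _ perm, of "transpose_mat S"] S by simp
  then show ?thesis using det_transpose[OF S] unfolding S_def J_def by auto
qed

lemma det_selected_cols_mem_minor_ideal:
  assumes B: "B \<in> carrier_mat r n" and N: "N \<in> carrier_mat r r"
    and f: "\<forall>q<r. f q < n \<and> col N q = col B (f q)"
  shows "det N \<in> minor_ideal r B"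
proof (cases "inj_on f {..<r}")
  case True
  then obtain \<sigma> where \<sigma>: "det N = signof \<sigma> * det (submatrix B {..<r} (f ` {..<r}))"
    using det_selected_cols_eq_signof[OF B N f] by blast
  have "det (submatrix B {..<r} (f ` {..<r})) \<in> minor_ideal r B"
    unfolding minor_ideal_def using B f True
    by (intro ideal_gen_base CollectI exI[of _ "{..<r}"] exI[of _ "f ` {..<r}"])
      (auto simp: card_image)
  then show ?thesis unfolding \<sigma> minor_ideal_def by (rule ideal_gen_mult)
next
  case False
  then obtain q1 q2 where "q1 < r" "q2 < r" "q1 \<noteq> q2" "f q1 = f q2"
    unfolding inj_on_def by auto
  then have "det N = 0" using f by (intro det_identical_columns[OF N, of q1 q2]) auto
  then show ?thesis by (simp add: minor_ideal_def ideal_gen_zero)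
qed


lemma replace_col_carrier [simp]: "M \<in> carrier_mat n n \<Longrightarrow> replace_col M b k \<in> carrier_mat n n"
  by (simp add: replace_col_def)

lemma seq_mat_entry_replace_col:
  assumes "M \<in> carrier_mat r r" "q < r"
  shows "seq_mat_entry a r (replace_col M (vec r v) k) q
    = (if q = k then (\<Sum>p<r. a p * v p) else seq_mat_entry a r M q)"
  unfolding seq_mat_entry_def using assms by (auto simp: replace_col_def intro: sum.cong)

lemma col_replace_col:
  assumes "M \<in> carrier_mat r r" "q < r" "dim_vec b = r"
  shows "col (replace_col M b k) q = (if q = k then b else col M q)"
  using assms by (auto simp: replace_col_def intro!: eq_vecI)

lemma det_replace_col_linear:
  assumes M: "M \<in> carrier_mat n n" and k: "k < n"
    and col_k: "\<forall>p<n. M $$ (p, k) = t p + (\<Sum>l<m. C l * w l p)"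
  shows "det M = det (replace_col M (vec n t) k)
    + (\<Sum>l<m. C l * det (replace_col M (vec n (w l)) k))"
proof -
  have "det M = (\<Sum>p<n. M $$ (p, k) * cofactor M p k)"
    by (rule laplace_expansion_column[OF M k])
  also have "\<dots> = (\<Sum>p<n. t p * cofactor M p k + (\<Sum>l<m. C l * (w l p * cofactor M p k)))"
    using col_k by (intro sum.cong) (auto simp: distrib_right sum_distrib_right mult.assoc)
  also have "\<dots> = (\<Sum>p<n. t p * cofactor M p k) + (\<Sum>l<m. C l * (\<Sum>p<n. w l p * cofactor M p k))"
    by (simp add: sum.distrib sum_distrib_left sum.swap[of _ "{..<m}"])
  finally show ?thesis by (simp add: det_replace_col[OF M k])
qed

lemma det_col_syzygy_decomposition:
  assumes B: "B \<in> carrier_mat r n" and N: "N \<in> carrier_mat r r" and m: "m < r"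
    and entry: "seq_mat_entry a r N m \<in> seq_mat_ideal a r B"
  obtains t C where "(\<Sum>p<r. a p * t p) = 0"
    and "det N = det (replace_col N (vec r t) m) + (\<Sum>l<n. C l * det (replace_col N (col B l) m))"
proof -
  have "seq_mat_entry a r N m \<in> ideal_gen (seq_mat_entry a r B ` {..<n})"
    using entry B by (simp add: seq_mat_ideal_eq)
  then obtain C where C: "seq_mat_entry a r N m = (\<Sum>l<n. C l * seq_mat_entry a r B l)"
    using ideal_gen_image_finite[of "{..<n}"] by blast
  define t where "t p = N $$ (p, m) - (\<Sum>l<n. C l * B $$ (p, l))" for p
  have "(\<Sum>p<r. a p * (\<Sum>l<n. C l * B $$ (p, l))) = (\<Sum>l<n. C l * seq_mat_entry a r B l)"
    unfolding seq_mat_entry_def sum_distrib_left by (subst sum.swap) (simp add: ac_simps)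
  then have "(\<Sum>p<r. a p * t p) = 0"
    using C unfolding t_def seq_mat_entry_def by (simp add: right_diff_distrib sum_subtractf)
  moreover have "col B l = vec r (\<lambda>p. B $$ (p, l))" for l using B by (simp add: col_def)
  then have "det N = det (replace_col N (vec r t) m)
      + (\<Sum>l<n. C l * det (replace_col N (col B l) m))"
    by (simp only:) (rule det_replace_col_linear[OF N m], simp add: t_def)
  ultimately show ?thesis using that by blast
qed

lemma det_mem_ideal_add_minor_ideal:
  fixes a :: "nat \<Rightarrow> 'a::comm_ring_1"
  assumes reg: "weakly_regular_seq a r" and B: "B \<in> carrier_mat r n"
    and N: "N \<in> carrier_mat r r"
    and entries: "\<forall>q<r. seq_mat_entry a r N q \<in> seq_mat_ideal a r B"
  shows "det N \<in> ideal_add (seq_mat_ideal a r B) (minor_ideal r B)"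
proof -
  define A where "A = seq_mat_ideal a r B"
  define T where "T = ideal_add A (minor_ideal r B)"
  have A: "is_ideal A" unfolding A_def by (rule is_ideal_seq_mat_ideal)
  have T: "is_ideal T" unfolding T_def by (intro is_ideal_ideal_add A is_ideal_minor_ideal)
  have A_T: "A \<subseteq> T" unfolding T_def by (intro ideal_add_upper1 is_ideal_minor_ideal)
  have minors_T: "minor_ideal r B \<subseteq> T" unfolding T_def by (rule ideal_add_upper2[OF A])
  have col_B: "col B l = vec r (\<lambda>p. B $$ (p, l))" for l using B by (simp add: col_def)
  have "det N \<in> T" if "N \<in> carrier_mat r r" "\<forall>q<r. seq_mat_entry a r N q \<in> A"
      "\<forall>q<m. f q < n \<and> col N q = col B (f q)" for N m f
    using that
  proof (induction "r - m" arbitrary: m N f)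
    case 0
    then have "\<forall>q<r. f q < n \<and> col N q = col B (f q)" by auto
    then show ?case using det_selected_cols_mem_minor_ideal[OF B "0.prems"(1)] minors_T by blast
  next
    case (Suc d)
    note N = Suc.prems(1)
    have m: "m < r" using Suc.hyps(2) by simp
    obtain t C where syz: "(\<Sum>p<r. a p * t p) = 0" and split:
        "det N = det (replace_col N (vec r t) m) + (\<Sum>l<n. C l * det (replace_col N (col B l) m))"
      using det_col_syzygy_decomposition[OF B N m] Suc.prems(2) m
      unfolding A_def by blast
    have "det (replace_col N (vec r t) m)
        \<in> ideal_gen (seq_mat_entry a r (replace_col N (vec r t) m) ` ({..<r} - {m}))"
      using N m syz
      by (intro det_mem_ideal_of_syzygy_col[OF reg]) (simp_all add: seq_mat_entry_replace_col)
    also have "\<dots> \<subseteq> A"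
      using Suc.prems(2) N by (intro ideal_gen_minimal[OF A]) (auto simp: seq_mat_entry_replace_col)
    finally have t_T: "det (replace_col N (vec r t) m) \<in> T" using A_T by blast
    have "det (replace_col N (col B l) m) \<in> T" if l: "l < n" for l
    proof (rule Suc.hyps(1)[of "Suc m"])
      show "d = r - Suc m" using Suc.hyps(2) by simp
      show "replace_col N (col B l) m \<in> carrier_mat r r" using N by simp
      have "(\<Sum>p<r. a p * B $$ (p, l)) \<in> A"
        using B l unfolding A_def seq_mat_ideal_eq seq_mat_entry_def by (auto intro: ideal_gen_base)
      then show "\<forall>q<r. seq_mat_entry a r (replace_col N (col B l) m) q \<in> A"
        using Suc.prems(2) N
        by (auto simp: col_B seq_mat_entry_replace_col)
      show "\<forall>q<Suc m. (f(m := l)) q < n \<and> col (replace_col N (col B l) m) q = col B ((f(m := l)) q)"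
        using Suc.prems(3) l m N B by (auto simp: col_replace_col less_Suc_eq)
    qed
    then have "(\<Sum>l<n. C l * det (replace_col N (col B l) m)) \<in> T"
      by (intro is_ideal_sum[OF T] is_ideal_mult[OF T]) auto
    then show ?case unfolding split using t_T by (rule is_ideal_add[OF T, rotated])
  qed
  from this[of N 0 undefined] N entries show ?thesis by (simp add: T_def A_def)
qed

lemma pick_lessThan: "p < r \<Longrightarrow> pick {..<r} p = p"
proof -
  assume p: "p < r"
  then have "{x \<in> {..<r}. x < p} = {..<p}" by auto
  then show ?thesis using pick_card_in_set[of p "{..<r}"] p by simp
qed

lemma minor_ideal_subset_ideal_add:
  assumes reg: "weakly_regular_seq a r" and B: "dim_row B = r" and B': "dim_row B' = r"
    and eq: "seq_mat_ideal a r B = seq_mat_ideal a r B'"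
  shows "minor_ideal r B \<subseteq> ideal_add (seq_mat_ideal a r B') (minor_ideal r B')"
proof -
  have minors: "det (submatrix B {..<r} J) \<in> ideal_add (seq_mat_ideal a r B') (minor_ideal r B')"
    if J: "J \<subseteq> {..<dim_col B}" "card J = r" for J
  proof (rule det_mem_ideal_add_minor_ideal[OF reg])
    show "B' \<in> carrier_mat r (dim_col B')" using B' by auto
    have dims: "{i. i < dim_row B \<and> i \<in> {..<r}} = {..<r}" "{j. j < dim_col B \<and> j \<in> J} = J"
      using B J by auto
    show "submatrix B {..<r} J \<in> carrier_mat r r"
      unfolding carrier_mat_def using dim_submatrix[of B "{..<r}" J] dims J by simp
    show "\<forall>q<r. seq_mat_entry a r (submatrix B {..<r} J) q \<in> seq_mat_ideal a r B'"
    proof (intro allI impI)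
      fix q assume q: "q < r"
      have "seq_mat_entry a r (submatrix B {..<r} J) q = seq_mat_entry a r B (pick J q)"
        unfolding seq_mat_entry_def
        by (intro sum.cong) (use submatrix_index[of _ B "{..<r}" q J] dims J q pick_lessThan in auto)
      also have "\<dots> \<in> seq_mat_ideal a r B"
        unfolding seq_mat_ideal_eq using pick_in_set[of q J] q J by (auto intro: ideal_gen_base)
      finally show "seq_mat_entry a r (submatrix B {..<r} J) q \<in> seq_mat_ideal a r B'"
        using eq by simp
    qed
  qed
  show ?thesis
    unfolding minor_ideal_def[of r B]
  proof (intro ideal_gen_minimal is_ideal_ideal_add is_ideal_seq_mat_ideal is_ideal_minor_ideal
      subsetI)
    fix x assume "x \<in> {det (submatrix B I J) |I J. I \<subseteq> {..<dim_row B}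
      \<and> J \<subseteq> {..<dim_col B} \<and> card I = r \<and> card J = r}"
    then obtain I J where x: "x = det (submatrix B I J)" and I: "I \<subseteq> {..<dim_row B}" "card I = r"
      and J: "J \<subseteq> {..<dim_col B}" "card J = r"
      by blast
    have "I = {..<r}" using I B by (simp add: card_subset_eq)
    with x J show "x \<in> ideal_add (seq_mat_ideal a r B') (minor_ideal r B')"
      using minors by simp
  qed
qed

lemma ideal_add_seq_mat_ideal_minor_ideal_subset:
  assumes reg: "weakly_regular_seq a r" and B: "dim_row B = r" and B': "dim_row B' = r"
    and eq: "seq_mat_ideal a r B = seq_mat_ideal a r B'"
  shows "ideal_add (seq_mat_ideal a r B) (minor_ideal r B)
    \<subseteq> ideal_add (seq_mat_ideal a r B') (minor_ideal r B')"
proof (rule ideal_add_least)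
  show "is_ideal (ideal_add (seq_mat_ideal a r B') (minor_ideal r B'))"
    by (intro is_ideal_ideal_add is_ideal_seq_mat_ideal is_ideal_minor_ideal)
  show "seq_mat_ideal a r B \<subseteq> ideal_add (seq_mat_ideal a r B') (minor_ideal r B')"
    unfolding eq by (rule ideal_add_upper1[OF is_ideal_minor_ideal])
  show "minor_ideal r B \<subseteq> ideal_add (seq_mat_ideal a r B') (minor_ideal r B')"
    by (rule minor_ideal_subset_ideal_add[OF reg B B' eq])
qed

theorem lemma4p4:
  fixes a :: "nat \<Rightarrow> 'a::comm_ring_1" and r :: nat and B B' :: "'a mat"
  assumes "regular_seq a r"
    and "dim_row B = r" and "dim_row B' = r"
    and "seq_mat_ideal a r B = seq_mat_ideal a r B'"
  shows "{x + y | x y. x \<in> seq_mat_ideal a r B \<and> y \<in> minor_ideal r B}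
       = {x + y | x y. x \<in> seq_mat_ideal a r B' \<and> y \<in> minor_ideal r B'}"
proof -
  have reg: "weakly_regular_seq a r"
    using assms(1) by (rule regular_seq_imp_weakly_regular)
  show ?thesis
    using ideal_add_seq_mat_ideal_minor_ideal_subset[OF reg assms(2-4)]
      ideal_add_seq_mat_ideal_minor_ideal_subset[OF reg assms(3,2) assms(4)[symmetric]]
    by (rule subset_antisym)
qed

end
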